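(* Let $s,t\in\Sigma^n$ and let $d:\Sigma^n\to\Sigma$ be a depth assignment such that $d_s=d_t$, or $s$ and $t$ share at least one symbol. Then \[D\left(P\left(H(s)+e_{d_s}\right)-P\left(H(t)+e_{d_t}\right)\right)\le n.\]
   Context: Let $k\ge 1$ be an integer, $\Sigma=\{0,1,\dots,k-1\}$, $n\ge 1$. A depth assignment is any function $d:\Sigma^n\to\Sigma$, written $s\mapsto d_s$. The histogram $H(s):\Sigma\to\mathbb{Z}$ of a string $s$ gives the number of occurrences of each symbol in $s$; $e_b$ is the indicator function of $b\in\Sigma$. For $H:\Sigma\to\mathbb{Z}$, the partial sum is $P(H)(i)=\sum_{j=0}^{i}H(j)$ and the difference is $D(H)=\max_{i,j\in\Sigma}(H(i)-H(j))$. "Share a symbol" means some $c\in\Sigma$ occurs in both $s$ and $t$. *)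

theory Defs
  imports Main
begin

definition strings :: "nat \<Rightarrow> nat \<Rightarrow> nat list set" where
  "strings k n = {s. length s = n \<and> set s \<subseteq> {0..<k}}"

definition depth_assignment :: "nat \<Rightarrow> nat \<Rightarrow> (nat list \<Rightarrow> nat) \<Rightarrow> bool" where
  "depth_assignment k n d \<longleftrightarrow> (\<forall>s \<in> strings k n. d s \<in> {0..<k})"

definition hist :: "nat list \<Rightarrow> nat \<Rightarrow> int" where
  "hist s b = int (count_list s b)"

definition ind :: "nat \<Rightarrow> nat \<Rightarrow> int" where
  "ind b = (\<lambda>i. if i = b then 1 else 0)"

definition psum :: "(nat \<Rightarrow> int) \<Rightarrow> nat \<Rightarrow> int" where
  "psum H i = (\<Sum>j\<le>i. H j)"

definition diff :: "nat \<Rightarrow> (nat \<Rightarrow> int) \<Rightarrow> int" where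
  "diff k H = Max {H i - H j | i j. i < k \<and> j < k}"

end

theory Submission
  imports Defs
begin

text \<open>Write \<open>f = H(s) + e\<^sub>d\<^sub>s\<close> and \<open>g = H(t) + e\<^sub>d\<^sub>t\<close>: both are nonnegative with total mass
  \<open>n + 1\<close>, and by hypothesis some symbol \<open>x\<close> has \<open>f x, g x \<ge> 1\<close>. A difference of two values of
  \<open>P f - P g\<close> is \<open>\<Sum>\<^sub>I f - \<Sum>\<^sub>I g\<close> (or its negative) over an interval \<open>I\<close> of symbols. If \<open>x \<in> I\<close>
  then \<open>\<Sum>\<^sub>I g \<ge> 1\<close>, otherwise \<open>\<Sum>\<^sub>I f \<le> n + 1 - f x \<le> n\<close>; either way the difference is at most \<open>n\<close>.\<close>

lemma sum_subset_diff_le_of_common_point: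
  fixes f g :: "'a \<Rightarrow> int"
  assumes "finite K" and "I \<subseteq> K"
    and f_nonneg: "\<forall>y\<in>K. f y \<ge> 0" and g_nonneg: "\<forall>y\<in>K. g y \<ge> 0"
    and f_total: "sum f K \<le> N + 1"
    and "x \<in> K" and "f x \<ge> 1" and "g x \<ge> 1"
  shows "sum f I - sum g I \<le> N"
proof -
  have "finite I" using assms(1,2) by (rule finite_subset[rotated])
  have f_split: "sum f K = sum f I + sum f (K - I)"
    using sum.subset_diff[OF assms(2,1)] by (simp add: add.commute)
  have "sum f (K - I) \<ge> 0" "sum g I \<ge> 0"
    using f_nonneg g_nonneg assms(2) by (auto intro: sum_nonneg)
  show ?thesis
  proof (cases "x \<in> I")
    case True
    with \<open>finite I\<close> g_nonneg assms(2) have "g x \<le> sum g I"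
      by (intro member_le_sum) auto
    then show ?thesis using f_split f_total \<open>g x \<ge> 1\<close> \<open>sum f (K - I) \<ge> 0\<close> by linarith
  next
    case False
    with assms(1,6) f_nonneg have "f x \<le> sum f (K - I)"
      by (intro member_le_sum) auto
    then show ?thesis using f_split f_total \<open>f x \<ge> 1\<close> \<open>sum g I \<ge> 0\<close> by linarith
  qed
qed

lemma psum_diff_eq_sum_interval:
  assumes "j \<le> i"
  shows "psum g i - psum g j = sum g {j<..i}"
proof -
  have "{..i} = {..j} \<union> {j<..i}" using assms by auto
  then show ?thesis unfolding psum_def
    by (simp add: sum.union_disjoint ivl_disj_int)
qed

lemma diff_le:
  assumes "k \<ge> 1" and "\<And>i j. i < k \<Longrightarrow> j < k \<Longrightarrow> H i - H j \<le> c"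
  shows "diff k H \<le> c"
proof -
  have "{H i - H j | i j. i < k \<and> j < k} = (\<lambda>(i, j). H i - H j) ` ({..<k} \<times> {..<k})"
    by auto
  moreover have "{H i - H j | i j. i < k \<and> j < k} \<noteq> {}"
    using assms(1) by fastforce
  ultimately show ?thesis
    unfolding diff_def using assms(2) by (subst Max_le_iff) auto
qed

lemma diff_psum_le_of_common_point:
  fixes f g :: "nat \<Rightarrow> int"
  assumes "k \<ge> 1"
    and "\<forall>y<k. f y \<ge> 0" and "\<forall>y<k. g y \<ge> 0"
    and "sum f {..<k} \<le> N + 1" and "sum g {..<k} \<le> N + 1"
    and "x < k" and "f x \<ge> 1" and "g x \<ge> 1"
  shows "diff k (\<lambda>i. psum f i - psum g i) \<le> N"
proof (rule diff_le[OF \<open>k \<ge> 1\<close>])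
  fix i j assume "i < k" "j < k"
  show "(psum f i - psum g i) - (psum f j - psum g j) \<le> N"
  proof (cases "j \<le> i")
    case True
    have "sum f {j<..i} - sum g {j<..i} \<le> N"
      using \<open>i < k\<close> assms by (intro sum_subset_diff_le_of_common_point[of "{..<k}"]) auto
    then show ?thesis
      using psum_diff_eq_sum_interval[OF True, of f] psum_diff_eq_sum_interval[OF True, of g]
      by linarith
  next
    case False
    then have "i \<le> j" by simp
    have "sum g {i<..j} - sum f {i<..j} \<le> N"
      using \<open>j < k\<close> assms by (intro sum_subset_diff_le_of_common_point[of "{..<k}"]) auto
    then show ?thesis
      using psum_diff_eq_sum_interval[OF \<open>i \<le> j\<close>, of f] psum_diff_eq_sum_interval[OF \<open>i \<le> j\<close>, of g]
      by linarith
  qed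
qed

lemma sum_hist_strings:
  assumes "s \<in> strings k n"
  shows "sum (hist s) {..<k} = int n"
proof -
  have "sum (count_list s) {..<k} = length s"
    using assms by (intro sum_count_set) (auto simp: strings_def)
  then show ?thesis
    using assms by (simp add: hist_def strings_def flip: of_nat_sum)
qed

lemma sum_ind:
  assumes "b < k"
  shows "sum (ind b) {..<k} = 1"
  using assms by (simp add: ind_def)

lemma hist_pos_iff_mem: "hist s c \<ge> 1 \<longleftrightarrow> c \<in> set s"
  using count_list_0_iff[of s c] by (auto simp: hist_def)

theorem lemma8:
  fixes k n :: nat and d :: "nat list \<Rightarrow> nat" and s t :: "nat list"
  assumes "k \<ge> 1" and "n \<ge> 1"
    and "depth_assignment k n d"
    and "s \<in> strings k n" and "t \<in> strings k n"
    and "d s = d t \<or> (\<exists>c. c \<in> set s \<and> c \<in> set t)"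
  shows "diff k (\<lambda>i. psum (\<lambda>j. hist s j + ind (d s) j) i
                   - psum (\<lambda>j. hist t j + ind (d t) j) i) \<le> int n"
proof -
  have "d s < k" "d t < k"
    using assms(3-5) by (auto simp: depth_assignment_def)
  have mass: "sum (\<lambda>j. hist u j + ind (d u) j) {..<k} = int n + 1"
    if "u \<in> strings k n" "d u < k" for u
    using that by (simp add: sum.distrib sum_hist_strings sum_ind)
  obtain x where "x < k" "hist s x + ind (d s) x \<ge> 1" "hist t x + ind (d t) x \<ge> 1"
    using assms(6)
  proof
    assume "d s = d t"
    then show thesis
      using that[of "d s"] \<open>d s < k\<close> by (simp add: ind_def hist_def)
  next
    assume "\<exists>c. c \<in> set s \<and> c \<in> set t"
    then obtain c where "c \<in> set s" "c \<in> set t" by blast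
    then have "hist s c \<ge> 1" "hist t c \<ge> 1" by (simp_all add: hist_pos_iff_mem)
    moreover from \<open>c \<in> set s\<close> assms(4) have "c < k" by (auto simp: strings_def)
    ultimately show thesis
      by (intro that[of c]) (auto simp: ind_def)
  qed
  then show ?thesis
    using assms(1,4,5) \<open>d s < k\<close> \<open>d t < k\<close> mass
    by (intro diff_psum_le_of_common_point) (auto simp: hist_def ind_def)
qed

end
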